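(* Let $y_n\in\mathbb{R}^2$, $\rho_n>0$ be sequences and $M\in\mathbb{N}$. Let $\omega_\infty\in\mathbb{S}^2$ be a constant, $\omega_1,\dots,\omega_M$ non-constant harmonic maps, and $b_{n,j}\in D(y_n,\rho_n)$, $\mu_{n,j}\in(0,\infty)$ for $j\in\{1,\dots,M\}$ sequences such that $$\lim_{n\to\infty}\Big[\sum_{j\ne k}\Big(\frac{\mu_{n,j}}{\mu_{n,k}}+\frac{\mu_{n,k}}{\mu_{n,j}}+\frac{|b_{n,j}-b_{n,k}|}{\mu_{n,j}}\Big)^{-1}+\sum_{j=1}^M\frac{\mu_{n,j}}{\operatorname{dist}(b_{n,j},\partial D(y_n,\rho_n))}\Big]=0.$$ Then $$\lim_{n\to\infty}E\Big(\omega_\infty+\sum_{j=1}^M\Big(\omega_j\Big(\frac{\cdot-b_{n,j}}{\mu_{n,j}}\Big)-\omega_j(\infty)\Big);D(y_n,\rho_n)\Big)=\sum_{j=1}^ME(\omega_j).$$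
   Context: $D(y,\rho)$ is the open disc of radius $\rho$ centered at $y$; for $v:\mathbb{R}^2\to\mathbb{R}^3$, $E(v;\Omega):=\frac12\int_\Omega|\nabla v|^2$, $E(v)=E(v;\mathbb{R}^2)$. A harmonic map is a finite-energy map $\omega:\mathbb{R}^2\to\mathbb{S}^2$ solving $\Delta\omega+\omega|\nabla\omega|^2=0$; for non-constant ones $\omega(\infty):=\lim_{|x|\to\infty}\omega(x)\in\mathbb{S}^2$ exists. *)

theory Defs
  imports "HOL-Analysis.Analysis"
begin

definition pd :: "2 \<Rightarrow> (real^2 \<Rightarrow> real^3) \<Rightarrow> real^2 \<Rightarrow> real^3" where
  "pd i f = (\<lambda>x. frechet_derivative f (at x) (axis i 1))"

definition grad_sq :: "(real^2 \<Rightarrow> real^3) \<Rightarrow> real^2 \<Rightarrow> real" where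
  "grad_sq f x = (\<Sum>i\<in>UNIV. (norm (pd i f x))^2)"

definition laplacian :: "(real^2 \<Rightarrow> real^3) \<Rightarrow> real^2 \<Rightarrow> real^3" where
  "laplacian f x = (\<Sum>i\<in>UNIV. pd i (pd i f) x)"

definition energy :: "(real^2 \<Rightarrow> real^3) \<Rightarrow> (real^2) set \<Rightarrow> real" where
  "energy f \<Omega> = (1/2) * integral \<Omega> (grad_sq f)"

definition harmonic_map :: "(real^2 \<Rightarrow> real^3) \<Rightarrow> bool" where
  "harmonic_map w \<longleftrightarrow>
     (\<forall>x. norm (w x) = 1) \<and>
     (\<forall>x. w differentiable (at x)) \<and>
     (\<forall>i x. pd i w differentiable (at x)) \<and>
     (\<forall>x. laplacian w x + grad_sq w x *\<^sub>R w x = 0) \<and>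
     grad_sq w integrable_on UNIV"

definition value_at_infinity :: "(real^2 \<Rightarrow> real^3) \<Rightarrow> real^3" where
  "value_at_infinity w = Lim at_infinity w"

end

theory Submission
  imports Defs
begin

text \<open>
  The gradient of the superposition is the sum of the gradients of the rescaled bubbles, so
  pointwise the energy density of the superposition differs from the sum of the bubble energy
  densities by at most the cross terms \<open>|\<nabla>\<omega>\<^sub>j\<^sup>n| |\<nabla>\<omega>\<^sub>k\<^sup>n|\<close>, \<open>j \<noteq> k\<close>. In dimension two
  the energy density of a rescaled bubble is the mass-preserving rescaling of that of \<open>\<omega>\<^sub>j\<close>;
  as the disc eventually contains every ball \<open>D(b\<^sub>n\<^sub>,\<^sub>j, R \<mu>\<^sub>n\<^sub>,\<^sub>j)\<close>, its integral over the disc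
  tends to \<open>2 E(\<omega>\<^sub>j)\<close>. By Cauchy-Schwarz a cross term has small integral unless the two bubbles
  have comparable scales and centres at a distance comparable to the scale, which is exactly
  what the separation hypothesis rules out.
\<close>


section \<open>Energy densities\<close>

definition energy_density :: "('a::euclidean_space \<Rightarrow> real) \<Rightarrow> bool" where
  "energy_density G \<longleftrightarrow> continuous_on UNIV G \<and> (\<forall>x. 0 \<le> G x) \<and> G integrable_on UNIV"

lemma energy_densityD:
  assumes "energy_density G"
  shows "continuous_on UNIV G" "0 \<le> G x" "G integrable_on UNIV"
  using assms by (auto simp: energy_density_def)

lemma continuous_dominated_integrable_on:
  fixes f H :: "'a::euclidean_space \<Rightarrow> real"
  assumes f: "continuous_on UNIV f" and H: "H integrable_on UNIV" and le: "\<And>x. \<bar>f x\<bar> \<le> H x"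
    and S: "S \<in> sets lebesgue"
  shows "f integrable_on S"
proof -
  have "f \<in> borel_measurable (lebesgue_on S)"
    using continuous_imp_measurable_on_sets_lebesgue[OF continuous_on_subset[OF f] S] by simp
  then have "(\<lambda>x. if x \<in> S then f x else 0) \<in> borel_measurable (lebesgue_on UNIV)"
    using borel_measurable_if_I[OF _ S] by (simp add: lebesgue_on_UNIV_eq)
  then have "(\<lambda>x. if x \<in> S then f x else 0) integrable_on UNIV"
  proof (rule measurable_bounded_by_integrable_imp_integrable_real[OF _ H])
    show "\<bar>if x \<in> S then f x else 0\<bar> \<le> H x" for x
      using le[of x] abs_ge_zero[of "f x"] by auto
  qed simp
  then show ?thesis
    by (simp add: integrable_restrict_UNIV)
qed

lemma energy_density_integrable_on:
  assumes G: "energy_density G" and S: "S \<in> sets lebesgue"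
  shows "G integrable_on S"
proof (rule continuous_dominated_integrable_on[OF _ _ _ S])
  show "\<bar>G x\<bar> \<le> G x" for x
    using energy_densityD(2)[OF G] by simp
qed (use energy_densityD[OF G] in auto)

lemma energy_density_integral_nonneg:
  assumes G: "energy_density G"
  shows "0 \<le> integral S G"
proof (cases "G integrable_on S")
  case True
  then show ?thesis
    using energy_densityD(2)[OF G] by (simp add: integral_nonneg)
qed (simp add: not_integrable_integral)

lemma energy_density_integral_mono:
  assumes G: "energy_density G" and "S \<subseteq> T" "S \<in> sets lebesgue" "T \<in> sets lebesgue"
  shows "integral S G \<le> integral T G"
  using assms energy_densityD(2)[OF G]
  by (intro integral_subset_le energy_density_integrable_on) auto

lemma energy_density_integral_split:
  assumes G: "energy_density G" and S: "S \<in> sets lebesgue" and T: "T \<in> sets lebesgue"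
  shows "integral S G = integral (S \<inter> T) G + integral (S - T) G"
proof -
  have "integral ((S \<inter> T) \<union> (S - T)) G = integral (S \<inter> T) G + integral (S - T) G"
    using S T by (intro integral_Un energy_density_integrable_on[OF G]) (auto simp: Int_Diff_disjoint)
  moreover have "(S \<inter> T) \<union> (S - T) = S"
    by blast
  ultimately show ?thesis
    by simp
qed

lemma energy_density_integral_Compl:
  assumes G: "energy_density G" and S: "S \<in> sets lebesgue"
  shows "integral (- S) G = integral UNIV G - integral S G"
  using energy_density_integral_split[OF G _ S, of UNIV] by (simp add: Compl_eq_Diff_UNIV)

lemma energy_density_integral_le_measure:
  assumes G: "energy_density G" and S: "S \<in> sets lebesgue" and B: "B \<in> lmeasurable"
    and K: "\<And>x. x \<in> S \<Longrightarrow> G x \<le> K" "K \<ge> 0"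
  shows "integral (B \<inter> S) G \<le> K * measure lebesgue B"
proof -
  have "integral (B \<inter> S) G \<le> integral (B \<inter> S) (\<lambda>_. K)"
    using K(1) S B
    by (intro integral_le energy_density_integrable_on[OF G] integrable_on_const fmeasurable_Int_fmeasurable) auto
  also have "\<dots> \<le> integral B (\<lambda>_. K)"
    using K(2) S B by (intro integral_subset_le integrable_on_const fmeasurable_Int_fmeasurable) auto
  also have "\<dots> = K * measure lebesgue B"
    using lmeasure_integral[OF B] integral_mult_right[of B K "\<lambda>_. 1"] by simp
  finally show ?thesis .
qed

lemma energy_density_add:
  assumes "energy_density F" "energy_density G"
  shows "energy_density (\<lambda>x. F x + G x)"
  using assms by (auto simp: energy_density_def intro: continuous_on_add integrable_add)

lemma energy_density_sum:
  assumes "finite I" "\<And>i. i \<in> I \<Longrightarrow> energy_density (F i)"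
  shows "energy_density (\<lambda>x. \<Sum>i\<in>I. F i x)"
  using assms by (auto simp: energy_density_def intro: continuous_on_sum integrable_sum sum_nonneg)

lemma energy_density_sqrt_mult:
  assumes F: "energy_density F" and G: "energy_density G"
  shows "energy_density (\<lambda>x. sqrt (F x * G x))"
proof -
  have cont: "continuous_on UNIV (\<lambda>x. sqrt (F x * G x))"
    using F G by (intro continuous_intros) (auto dest: energy_densityD)
  have "\<bar>sqrt (F x * G x)\<bar> \<le> (F x + G x) / 2" for x
    using arith_geo_mean_sqrt[of "F x" "G x"] F G by (simp add: energy_densityD)
  then have "(\<lambda>x. sqrt (F x * G x)) integrable_on UNIV"
    using F G by (intro continuous_dominated_integrable_on[OF cont, of "\<lambda>x. (F x + G x) / 2"])
      (auto intro: integrable_add integrable_on_divide dest: energy_densityD)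
  with cont F G show ?thesis
    by (auto simp: energy_density_def dest: energy_densityD)
qed

lemma energy_density_tail:
  fixes G :: "'a::euclidean_space \<Rightarrow> real"
  assumes G: "energy_density G" and \<epsilon>: "\<epsilon> > 0"
  obtains R where "R > 0" "\<And>R'. R \<le> R' \<Longrightarrow> integral (- ball 0 R') G \<le> \<epsilon>"
proof -
  define f where "f m = (\<lambda>x. if x \<in> - ball 0 (real m) then G x else 0)" for m :: nat
  have f_int: "f m integrable_on UNIV" for m
    unfolding f_def integrable_restrict_UNIV
    by (rule energy_density_integrable_on[OF G]) (simp add: Compl_in_sets_lebesgue)
  have "(\<lambda>m. integral UNIV (f m)) \<longlonglongrightarrow> integral UNIV (\<lambda>x::'a. 0::real)"
  proof (rule Equivalence_Lebesgue_Henstock_Integration.dominated_convergence(2)[OF f_int energy_densityD(3)[OF G]])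
    show "norm (f m x) \<le> G x" for m x
      using energy_densityD(2)[OF G] by (simp add: f_def)
    show "(\<lambda>m. f m x) \<longlonglongrightarrow> 0" for x
    proof (rule tendsto_eventually)
      obtain N :: nat where "norm x < real N"
        using reals_Archimedean2 by blast
      then show "\<forall>\<^sub>F m in sequentially. f m x = 0"
        unfolding eventually_sequentially f_def by (intro exI[of _ N]) auto
    qed
  qed
  from order_tendstoD(2)[OF this, of \<epsilon>] \<epsilon>
  obtain N where "\<And>m. m \<ge> N \<Longrightarrow> integral UNIV (f m) < \<epsilon>"
    by (auto simp: eventually_sequentially)
  from this[of "Suc N"] have "integral (- ball 0 (real (Suc N))) G < \<epsilon>"
    by (simp only: f_def integral_restrict_UNIV)
  moreover have "integral (- ball 0 R') G \<le> integral (- ball 0 (real (Suc N))) G" if "real (Suc N) \<le> R'" for R'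
    using that by (intro energy_density_integral_mono[OF G]) (auto simp: Compl_in_sets_lebesgue)
  ultimately show ?thesis
    by (intro that[of "real (Suc N)"]) fastforce+
qed

lemma energy_density_small_balls:
  fixes G :: "'a::euclidean_space \<Rightarrow> real"
  assumes G: "energy_density G" and \<epsilon>: "\<epsilon> > 0"
  obtains \<delta> where "\<delta> > 0" "\<And>c r. r \<le> \<delta> \<Longrightarrow> integral (ball c r) G \<le> \<epsilon>"
proof -
  obtain R where R: "R > 0" "integral (- ball 0 R) G \<le> \<epsilon> / 2"
    using energy_density_tail[OF G, of "\<epsilon> / 2"] \<epsilon> by (metis half_gt_zero order_refl)
  have "bounded (G ` cball 0 R)"
    using energy_densityD(1)[OF G]
    by (intro compact_imp_bounded compact_continuous_image) (auto intro: continuous_on_subset)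
  then obtain K where K: "K > 0" "\<And>x. x \<in> cball 0 R \<Longrightarrow> \<bar>G x\<bar> \<le> K"
    unfolding bounded_pos by fastforce
  define V where "V = unit_ball_vol (DIM('a))"
  have V: "V > 0"
    by (simp add: V_def)
  define \<delta> where "\<delta> = min 1 (\<epsilon> / (2 * K * V))"
  have "integral (ball c r) G \<le> \<epsilon>" if r: "r \<le> \<delta>" for c r
  proof (cases "r > 0")
    case True
    have "integral (ball c r \<inter> cball 0 R) G \<le> K * measure lebesgue (ball c r)"
      using K by (intro energy_density_integral_le_measure[OF G]) (auto dest: abs_le_D1)
    also have "\<dots> = K * V * r ^ DIM('a)"
      using content_ball[of r c] True by (simp add: V_def)
    also have "\<dots> \<le> K * V * r"
      using True r K(1) V
      by (intro mult_left_mono power_decreasing[of 1, simplified]) (auto simp: \<delta>_def DIM_positive)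
    also have "\<dots> \<le> \<epsilon> / 2"
      using r K(1) V by (simp add: \<delta>_def field_simps)
    finally have "integral (ball c r \<inter> cball 0 R) G \<le> \<epsilon> / 2" .
    moreover have "integral (ball c r - cball 0 R) G \<le> integral (- ball 0 R) G"
      by (intro energy_density_integral_mono[OF G]) (auto simp: Compl_in_sets_lebesgue)
    ultimately show ?thesis
      using R(2) energy_density_integral_split[OF G, of "ball c r" "cball 0 R"] by simp
  qed (use \<epsilon> in \<open>simp add: ball_empty\<close>)
  then show ?thesis
    using that[of \<delta>] \<epsilon> K(1) V by (simp add: \<delta>_def)
qed

lemma energy_density_small_or_far_balls:
  fixes G :: "'a::euclidean_space \<Rightarrow> real"
  assumes G: "energy_density G" and \<eta>: "\<eta> > 0" and R: "R > 0" and tail: "integral (- ball 0 R) G \<le> \<eta>"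
  obtains \<delta> where "\<delta> > 0"
    "\<And>c q. q > 0 \<Longrightarrow> q \<le> \<delta> \<or> (R + R / \<delta>) * q \<le> norm c \<Longrightarrow> integral (ball c (R * q)) G \<le> \<eta>"
proof -
  obtain \<delta>0 where \<delta>0: "\<delta>0 > 0" "\<And>c r. r \<le> \<delta>0 \<Longrightarrow> integral (ball c r) G \<le> \<eta>"
    using energy_density_small_balls[OF G \<eta>] by blast
  define \<delta> where "\<delta> = \<delta>0 / R"
  have \<delta>: "\<delta> > 0"
    using R \<delta>0(1) by (simp add: \<delta>_def)
  have "integral (ball c (R * q)) G \<le> \<eta>" if q: "q > 0" "q \<le> \<delta> \<or> (R + R / \<delta>) * q \<le> norm c" for c q
  proof (cases "q \<le> \<delta>")
    case True
    then show ?thesis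
      using \<delta>0(2) R by (simp add: \<delta>_def pos_le_divide_eq mult.commute)
  next
    case False
    then have "R < R * (q / \<delta>)"
      using R \<delta> by (simp add: field_simps)
    then have "R * q + R \<le> dist c 0"
      using False q by (simp add: algebra_simps)
    then have "ball c (R * q) \<subseteq> - ball 0 R"
      using disjoint_ballI by blast
    then have "integral (ball c (R * q)) G \<le> integral (- ball 0 R) G"
      by (intro energy_density_integral_mono[OF G]) (auto simp: Compl_in_sets_lebesgue)
    with tail show ?thesis
      by simp
  qed
  with \<delta> show ?thesis
    using that by blast
qed

section \<open>Rescaled densities\<close>

definition rescaled :: "('a::euclidean_space \<Rightarrow> real) \<Rightarrow> real \<Rightarrow> 'a \<Rightarrow> 'a \<Rightarrow> real" where
  "rescaled G \<mu> b x = G ((1 / \<mu>) *\<^sub>R (x - b)) / \<mu> ^ DIM('a)"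

lemma has_integral_affine_rescale:
  fixes f :: "'a::euclidean_space \<Rightarrow> real"
  assumes f: "f absolutely_integrable_on UNIV" and \<mu>: "\<mu> > 0"
  shows "((\<lambda>x. f ((1 / \<mu>) *\<^sub>R (x - b))) has_integral \<mu> ^ DIM('a) * integral UNIV f) UNIV"
proof -
  \<comment> \<open>coordinatewise form, as required by \<open>lebesgue_affine_euclidean\<close>\<close>
  define T where "T = (\<lambda>x::'a. - ((1 / \<mu>) *\<^sub>R b) + (\<Sum>j\<in>Basis. ((1 / \<mu>) * (x \<bullet> j)) *\<^sub>R j))"
  have T: "T x = (1 / \<mu>) *\<^sub>R (x - b)" for x
  proof -
    have "(\<Sum>j\<in>Basis. ((1 / \<mu>) * (x \<bullet> j)) *\<^sub>R j) = (1 / \<mu>) *\<^sub>R x"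
      by (simp only: scaleR_scaleR[symmetric] scaleR_sum_right[symmetric] euclidean_representation)
    then show ?thesis
      by (simp add: T_def algebra_simps)
  qed
  have lebesgue: "lebesgue = density (distr lebesgue lebesgue T) (\<lambda>_. ennreal ((1 / \<mu>) ^ DIM('a)))"
    and T_meas: "T \<in> lebesgue \<rightarrow>\<^sub>M lebesgue"
    using lebesgue_affine_euclidean[of "\<lambda>_. 1 / \<mu>" "- ((1 / \<mu>) *\<^sub>R b)", folded T_def]
      lebesgue_affine_measurable[of "\<lambda>_. 1 / \<mu>" "- ((1 / \<mu>) *\<^sub>R b)", folded T_def] \<mu>
    by (auto simp: prod_constant)
  have f_int: "integrable lebesgue f"
    using f by (simp add: set_integrable_def)
  then have f_meas: "f \<in> borel_measurable lebesgue"
    by (rule borel_measurable_integrable)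
  have "integrable (distr lebesgue lebesgue T) (\<lambda>x. (1 / \<mu>) ^ DIM('a) *\<^sub>R f x)"
    using f_int f_meas \<mu> by (subst (asm) lebesgue) (simp add: integrable_density)
  then have "integrable lebesgue (\<lambda>x. f (T x))"
    using \<mu> T_meas f_meas by (simp add: integrable_distr_eq)
  moreover
  have "integral\<^sup>L lebesgue f = (1 / \<mu>) ^ DIM('a) * integral\<^sup>L lebesgue (\<lambda>x. f (T x))"
    using f_meas \<mu> T_meas by (subst lebesgue) (simp add: integral_density integral_distr)
  then have "integral\<^sup>L lebesgue (\<lambda>x. f (T x)) = \<mu> ^ DIM('a) * integral UNIV f"
    using \<mu> integral_lebesgue[OF f_int] by (simp add: field_simps)
  ultimately show ?thesis
    unfolding T[symmetric] by (metis has_integral_integral_lebesgue)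
qed

lemma has_integral_rescaled:
  assumes G: "energy_density G" and \<mu>: "\<mu> > 0" and S: "S \<in> sets lebesgue"
  shows "(rescaled G \<mu> b has_integral integral S G) {x. (1 / \<mu>) *\<^sub>R (x - b) \<in> S}"
proof -
  let ?GS = "\<lambda>x. if x \<in> S then G x else 0"
  have "?GS absolutely_integrable_on UNIV"
    using energy_density_integrable_on[OF G S] G
    by (intro nonnegative_absolutely_integrable_1) (auto simp: integrable_restrict_UNIV energy_densityD)
  from has_integral_mult_right[OF has_integral_affine_rescale[OF this \<mu>], of "1 / \<mu> ^ DIM('a)" b]
  have "((\<lambda>x. if (1 / \<mu>) *\<^sub>R (x - b) \<in> S then rescaled G \<mu> b x else 0) has_integral integral S G) UNIV"
    using \<mu> by (simp add: rescaled_def integral_restrict_UNIV if_distrib cong: if_cong)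
  then show ?thesis
    by (simp add: has_integral_restrict_UNIV[symmetric, where f = "rescaled G \<mu> b"])
qed

lemma energy_density_rescaled:
  assumes G: "energy_density G" and \<mu>: "\<mu> > 0"
  shows "energy_density (rescaled G \<mu> b)"
  unfolding energy_density_def
proof (intro conjI allI)
  have "continuous_on UNIV (\<lambda>x. G ((1 / \<mu>) *\<^sub>R (x - b)))"
    by (rule continuous_on_compose2[OF energy_densityD(1)[OF G]]) (auto intro!: continuous_intros)
  then show "continuous_on UNIV (rescaled G \<mu> b)"
    unfolding rescaled_def[abs_def] by (intro continuous_intros) (use \<mu> in auto)
  show "0 \<le> rescaled G \<mu> b x" for x
    unfolding rescaled_def using \<mu> energy_densityD(2)[OF G] by simp
  show "rescaled G \<mu> b integrable_on UNIV"
    using has_integral_rescaled[OF G \<mu>, of UNIV b] by auto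
qed

lemma integral_rescaled_vimage:
  assumes "energy_density G" "\<mu> > 0" "S \<in> sets lebesgue"
  shows "integral {x. (1 / \<mu>) *\<^sub>R (x - b) \<in> S} (rescaled G \<mu> b) = integral S G"
  using has_integral_rescaled[OF assms] by (rule integral_unique)

lemma integral_rescaled_UNIV:
  assumes "energy_density G" "\<mu> > 0"
  shows "integral UNIV (rescaled G \<mu> b) = integral UNIV G"
  using integral_rescaled_vimage[OF assms, of UNIV b] by simp

lemma vimage_rescale_ball:
  fixes b c :: "'a::real_normed_vector"
  assumes "\<mu> > 0"
  shows "{x. (1 / \<mu>) *\<^sub>R (x - b) \<in> ball c r} = ball (b + \<mu> *\<^sub>R c) (\<mu> * r)"
proof -
  have "dist c ((1 / \<mu>) *\<^sub>R (x - b)) = dist (b + \<mu> *\<^sub>R c) x / \<mu>" for x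
  proof -
    have "c - (1 / \<mu>) *\<^sub>R (x - b) = (1 / \<mu>) *\<^sub>R ((b + \<mu> *\<^sub>R c) - x)"
      using assms by (simp add: algebra_simps)
    then show ?thesis
      using assms by (simp add: dist_norm)
  qed
  then show ?thesis
    using assms by (auto simp: pos_divide_less_eq mult.commute)
qed

lemma integral_rescaled_ball:
  assumes "energy_density G" "\<mu> > 0"
  shows "integral (ball (b + \<mu> *\<^sub>R c) (\<mu> * r)) (rescaled G \<mu> b) = integral (ball c r) G"
  unfolding vimage_rescale_ball[OF assms(2), symmetric] by (rule integral_rescaled_vimage[OF assms]) simp

lemma energy_density_integral_ball_tendsto:
  fixes G :: "'a::euclidean_space \<Rightarrow> real"
  assumes G: "energy_density G" and deep: "filterlim (\<lambda>n. r n - norm (c n)) at_top sequentially"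
  shows "(\<lambda>n. integral (ball (c n) (r n)) G) \<longlonglongrightarrow> integral UNIV G"
proof (rule order_tendstoI)
  fix a
  assume "integral UNIV G < a"
  moreover have "integral (ball (c n) (r n)) G \<le> integral UNIV G" for n
    by (rule energy_density_integral_mono[OF G]) auto
  ultimately show "\<forall>\<^sub>F n in sequentially. integral (ball (c n) (r n)) G < a"
    by (intro always_eventually allI) (rule le_less_trans)
next
  fix a
  assume "a < integral UNIV G"
  then have "(integral UNIV G - a) / 2 > 0"
    by simp
  then obtain R where R: "R > 0" "integral (- ball 0 R) G \<le> (integral UNIV G - a) / 2"
    using energy_density_tail[OF G] by (metis order_refl)
  have "\<forall>\<^sub>F n in sequentially. R \<le> r n - norm (c n)"
    using deep by (simp add: filterlim_at_top)
  then show "\<forall>\<^sub>F n in sequentially. a < integral (ball (c n) (r n)) G"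
  proof (rule eventually_mono)
    fix n
    assume R_le: "R \<le> r n - norm (c n)"
    have "ball 0 R \<subseteq> ball (c n) (r n)"
    proof
      fix x :: 'a
      assume "x \<in> ball 0 R"
      then show "x \<in> ball (c n) (r n)"
        using norm_triangle_ineq4[of "c n" x] R_le by (simp add: dist_norm)
    qed
    then have "integral (- ball (c n) (r n)) G \<le> integral (- ball 0 R) G"
      by (intro energy_density_integral_mono[OF G]) (auto simp: Compl_in_sets_lebesgue)
    then show "a < integral (ball (c n) (r n)) G"
      using R(2) energy_density_integral_Compl[OF G, of "ball (c n) (r n)"] \<open>a < integral UNIV G\<close>
      by simp
  qed
qed

lemma integral_rescaled_ball_tendsto:
  fixes G :: "'a::euclidean_space \<Rightarrow> real"
  assumes G: "energy_density G" and \<mu>: "\<And>n. \<mu> n > 0"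
    and deep: "filterlim (\<lambda>n. (\<rho> n - dist (y n) (b n)) / \<mu> n) at_top sequentially"
  shows "(\<lambda>n. integral (ball (y n) (\<rho> n)) (rescaled G (\<mu> n) (b n))) \<longlonglongrightarrow> integral UNIV G"
proof -
  define c where "c n = (1 / \<mu> n) *\<^sub>R (y n - b n)" for n
  define r where "r n = \<rho> n / \<mu> n" for n
  have "integral (ball (y n) (\<rho> n)) (rescaled G (\<mu> n) (b n)) = integral (ball (c n) (r n)) G" for n
    using integral_rescaled_ball[OF G \<mu>[of n], of "b n" "c n" "r n"] \<mu>[of n] by (simp add: c_def r_def)
  moreover have "r n - norm (c n) = (\<rho> n - dist (y n) (b n)) / \<mu> n" for n
    using \<mu>[of n] by (simp add: c_def r_def dist_norm diff_divide_distrib)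
  ultimately show ?thesis
    using energy_density_integral_ball_tendsto[OF G, of r c] deep by simp
qed

section \<open>Interaction of two rescaled densities\<close>

lemma le_sqrt_mult_of_amgm_bound:
  fixes X A B :: real
  assumes A: "0 \<le> A" and B: "0 \<le> B" and bound: "\<And>t. t > 0 \<Longrightarrow> X \<le> (t * A + B / t) / 2"
  shows "X \<le> sqrt (A * B)"
proof -
  have "X \<le> sqrt (A + e) * sqrt (B + e)" if e: "e > 0" for e
  proof -
    define a b where "a = sqrt (A + e)" and "b = sqrt (B + e)"
    have ab: "a > 0" "b > 0" "a\<^sup>2 = A + e" "b\<^sup>2 = B + e"
      using A B e by (auto simp: a_def b_def)
    have "(b / a) * A + B / (b / a) \<le> (b / a) * a\<^sup>2 + b\<^sup>2 / (b / a)"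
      using ab e by (intro add_mono mult_left_mono divide_right_mono) auto
    also have "\<dots> = 2 * (a * b)"
      using ab(1,2) by (simp add: field_simps power2_eq_square)
    finally show ?thesis
      using bound[of "b / a"] ab by (simp add: a_def b_def)
  qed
  then have "\<forall>\<^sub>F e in at_right 0. X \<le> sqrt (A + e) * sqrt (B + e)"
    by (rule eventually_mono[OF eventually_at_right_less])
  moreover have "((\<lambda>e. sqrt (A + e) * sqrt (B + e)) \<longlongrightarrow> sqrt (A + 0) * sqrt (B + 0)) (at_right 0)"
    by (intro tendsto_intros)
  ultimately show ?thesis
    by (simp add: tendsto_lowerbound real_sqrt_mult)
qed

lemma integral_sqrt_mult_le:
  fixes f g :: "'a::euclidean_space \<Rightarrow> real"
  assumes f: "f integrable_on S" and g: "g integrable_on S"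
    and fg: "(\<lambda>x. sqrt (f x * g x)) integrable_on S"
    and nonneg: "\<And>x. x \<in> S \<Longrightarrow> 0 \<le> f x" "\<And>x. x \<in> S \<Longrightarrow> 0 \<le> g x"
  shows "integral S (\<lambda>x. sqrt (f x * g x)) \<le> sqrt (integral S f * integral S g)"
proof (rule le_sqrt_mult_of_amgm_bound)
  show "0 \<le> integral S f" "0 \<le> integral S g"
    using f g nonneg by (auto intro: integral_nonneg)
  fix t :: real
  assume t: "t > 0"
  have "sqrt (f x * g x) \<le> (t * f x + g x / t) / 2" if "x \<in> S" for x
    using arith_geo_mean_sqrt[of "t * f x" "g x / t"] nonneg[OF that] t by simp
  then have "integral S (\<lambda>x. sqrt (f x * g x)) \<le> integral S (\<lambda>x. (t * f x + g x / t) / 2)"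
    using f g fg by (intro integral_le integrable_on_divide integrable_add integrable_on_mult_right) auto
  also have "\<dots> = (t * integral S f + integral S g / t) / 2"
    using f g by (simp add: integral_add integrable_on_mult_right integrable_on_divide)
  finally show "integral S (\<lambda>x. sqrt (f x * g x)) \<le> (t * integral S f + integral S g / t) / 2" .
qed

lemma sqrt_mult_le_half:
  fixes a E i e :: real
  assumes "0 \<le> a" "a \<le> E" "0 \<le> i" "i \<le> e\<^sup>2 / (4 * E)" "e > 0"
  shows "sqrt (a * i) \<le> e / 2"
proof -
  have "a * i \<le> E * (e\<^sup>2 / (4 * E))"
    using assms by (intro mult_mono) auto
  also have "\<dots> \<le> (e / 2)\<^sup>2"
    by (simp add: power_divide)
  finally have "sqrt (a * i) \<le> sqrt ((e / 2)\<^sup>2)"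
    by (rule real_sqrt_le_mono)
  then show ?thesis
    using assms(5) by simp
qed

lemma integral_sqrt_rescaled_le:
  assumes G1: "energy_density G1" and G2: "energy_density G2"
    and \<mu>1: "\<mu>1 > 0" and \<mu>2: "\<mu>2 > 0" and R: "R > 0"
  shows "integral UNIV (\<lambda>x. sqrt (rescaled G1 \<mu>1 b1 x * rescaled G2 \<mu>2 b2 x))
     \<le> sqrt (integral UNIV G1 * integral (ball ((1 / \<mu>2) *\<^sub>R (b1 - b2)) (R * \<mu>1 / \<mu>2)) G2)
       + sqrt (integral (- ball 0 R) G1 * integral UNIV G2)"
proof -
  let ?h1 = "rescaled G1 \<mu>1 b1" and ?h2 = "rescaled G2 \<mu>2 b2"
  let ?s = "\<lambda>x. sqrt (?h1 x * ?h2 x)"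
  let ?c = "(1 / \<mu>2) *\<^sub>R (b1 - b2)"
  define B where "B = ball b1 (\<mu>1 * R)"
  have h1: "energy_density ?h1" and h2: "energy_density ?h2"
    using energy_density_rescaled G1 G2 \<mu>1 \<mu>2 by auto
  have s: "energy_density ?s"
    by (rule energy_density_sqrt_mult[OF h1 h2])
  have B: "B \<in> sets lebesgue" "- B \<in> sets lebesgue"
    by (auto simp: B_def Compl_in_sets_lebesgue)
  have CS: "integral S ?s \<le> sqrt (integral S ?h1 * integral S ?h2)" if "S \<in> sets lebesgue" for S
    using that h1 h2 s
    by (intro integral_sqrt_mult_le energy_density_integrable_on) (auto dest: energy_densityD)
  have ball_B: "integral B ?h2 = integral (ball ?c (R * \<mu>1 / \<mu>2)) G2"
    using integral_rescaled_ball[OF G2 \<mu>2, of b2 ?c "R * \<mu>1 / \<mu>2"] \<mu>2 by (simp add: B_def mult.commute)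
  have "integral B ?s \<le> sqrt (integral B ?h1 * integral B ?h2)"
    by (rule CS[OF B(1)])
  also have "\<dots> \<le> sqrt (integral UNIV G1 * integral B ?h2)"
    using energy_density_integral_mono[OF h1, of B UNIV] B integral_rescaled_UNIV[OF G1 \<mu>1]
      energy_density_integral_nonneg[OF h2]
    by (intro real_sqrt_le_mono mult_right_mono) simp_all
  finally have on_B: "integral B ?s \<le> sqrt (integral UNIV G1 * integral (ball ?c (R * \<mu>1 / \<mu>2)) G2)"
    unfolding ball_B .
  have "- B = {x. (1 / \<mu>1) *\<^sub>R (x - b1) \<in> - ball 0 R}"
    using vimage_rescale_ball[OF \<mu>1, of b1 0 R] by (auto simp: B_def)
  then have tail_B: "integral (- B) ?h1 = integral (- ball 0 R) G1"
    using integral_rescaled_vimage[OF G1 \<mu>1, of "- ball 0 R" b1] by (simp add: Compl_in_sets_lebesgue)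
  have "integral (- B) ?s \<le> sqrt (integral (- B) ?h1 * integral (- B) ?h2)"
    by (rule CS[OF B(2)])
  also have "\<dots> \<le> sqrt (integral (- B) ?h1 * integral UNIV G2)"
    using energy_density_integral_mono[OF h2, of "- B" UNIV] B integral_rescaled_UNIV[OF G2 \<mu>2]
      energy_density_integral_nonneg[OF h1]
    by (intro real_sqrt_le_mono mult_left_mono) simp_all
  finally have off_B: "integral (- B) ?s \<le> sqrt (integral (- ball 0 R) G1 * integral UNIV G2)"
    unfolding tail_B .
  have "integral UNIV ?s = integral B ?s + integral (- B) ?s"
    using energy_density_integral_Compl[OF s B(1)] by simp
  with on_B off_B show ?thesis
    by linarith
qed

text \<open>A bubble much more concentrated than the second one, or far from it relative to its own scale,
  sits on a ball of small \<open>G2\<close>-mass after rescaling by the second scale.\<close>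

lemma integral_sqrt_rescaled_small:
  fixes G1 G2 :: "'a::euclidean_space \<Rightarrow> real"
  assumes G1: "energy_density G1" and G2: "energy_density G2" and e: "e > 0"
  obtains \<delta> C where "\<delta> > 0"
    "\<And>\<mu>1 \<mu>2 b1 b2. \<mu>1 > 0 \<Longrightarrow> \<mu>2 > 0 \<Longrightarrow> \<mu>1 / \<mu>2 \<le> \<delta> \<or> C \<le> norm (b1 - b2) / \<mu>1 \<Longrightarrow>
       integral UNIV (\<lambda>x. sqrt (rescaled G1 \<mu>1 b1 x * rescaled G2 \<mu>2 b2 x)) \<le> e"
proof -
  define E where "E = integral UNIV G1 + integral UNIV G2 + 1"
  define \<eta> where "\<eta> = e\<^sup>2 / (4 * E)"
  have E: "E > 0" "0 \<le> integral S G1" "integral UNIV G1 \<le> E" "0 \<le> integral S G2" "integral UNIV G2 \<le> E" for S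
    using energy_density_integral_nonneg[OF G1] energy_density_integral_nonneg[OF G2]
    by (auto simp: E_def add_nonneg_pos add_increasing add_increasing2)
  then have \<eta>: "\<eta> > 0"
    using e by (simp add: \<eta>_def)
  obtain R1 where R1: "R1 > 0" "\<And>R'. R1 \<le> R' \<Longrightarrow> integral (- ball 0 R') G1 \<le> \<eta>"
    using energy_density_tail[OF G1 \<eta>] by blast
  obtain R2 where R2: "\<And>R'. R2 \<le> R' \<Longrightarrow> integral (- ball 0 R') G2 \<le> \<eta>"
    using energy_density_tail[OF G2 \<eta>] by blast
  define R where "R = max R1 R2"
  have R: "R > 0"
    using R1(1) by (simp add: R_def)
  have tail: "integral (- ball 0 R) G1 \<le> \<eta>" "integral (- ball 0 R) G2 \<le> \<eta>"
    using R1(2) R2 by (simp_all add: R_def)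
  obtain \<delta> where \<delta>: "\<delta> > 0"
    and balls: "\<And>c q. q > 0 \<Longrightarrow> q \<le> \<delta> \<or> (R + R / \<delta>) * q \<le> norm c \<Longrightarrow> integral (ball c (R * q)) G2 \<le> \<eta>"
    using energy_density_small_or_far_balls[OF G2 \<eta> R tail(2)] by blast
  show ?thesis
  proof (rule that[OF \<delta>])
    fix \<mu>1 \<mu>2 :: real and b1 b2 :: 'a
    assume \<mu>: "\<mu>1 > 0" "\<mu>2 > 0" and alt: "\<mu>1 / \<mu>2 \<le> \<delta> \<or> R + R / \<delta> \<le> norm (b1 - b2) / \<mu>1"
    have "(R + R / \<delta>) * (\<mu>1 / \<mu>2) \<le> norm (b1 - b2) / \<mu>1 * (\<mu>1 / \<mu>2)" if "R + R / \<delta> \<le> norm (b1 - b2) / \<mu>1"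
      using that \<mu> by (intro mult_right_mono) auto
    then have "integral (ball ((1 / \<mu>2) *\<^sub>R (b1 - b2)) (R * (\<mu>1 / \<mu>2))) G2 \<le> \<eta>"
      using alt \<mu> by (intro balls) auto
    then have "sqrt (integral UNIV G1 * integral (ball ((1 / \<mu>2) *\<^sub>R (b1 - b2)) (R * \<mu>1 / \<mu>2)) G2) \<le> e / 2"
      using E e unfolding \<eta>_def by (intro sqrt_mult_le_half) auto
    moreover have "sqrt (integral (- ball 0 R) G1 * integral UNIV G2) \<le> e / 2"
      using sqrt_mult_le_half[of "integral UNIV G2" E "integral (- ball 0 R) G1" e] tail(1) E e
      by (simp add: \<eta>_def mult.commute)
    ultimately show "integral UNIV (\<lambda>x. sqrt (rescaled G1 \<mu>1 b1 x * rescaled G2 \<mu>2 b2 x)) \<le> e"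
      using integral_sqrt_rescaled_le[OF G1 G2 \<mu> R, of b1 b2] by linarith
  qed
qed

lemma integral_sqrt_rescaled_small_if_separated:
  fixes G1 G2 :: "'a::euclidean_space \<Rightarrow> real"
  assumes G1: "energy_density G1" and G2: "energy_density G2" and e: "e > 0"
  obtains C where "\<And>\<mu>1 \<mu>2 b1 b2. \<mu>1 > 0 \<Longrightarrow> \<mu>2 > 0 \<Longrightarrow>
      C \<le> \<mu>1 / \<mu>2 + \<mu>2 / \<mu>1 + norm (b1 - b2) / \<mu>1 \<Longrightarrow>
      integral UNIV (\<lambda>x. sqrt (rescaled G1 \<mu>1 b1 x * rescaled G2 \<mu>2 b2 x)) \<le> e"
proof -
  obtain \<delta>1 C1 where \<delta>1: "\<delta>1 > 0"
    and small1: "\<And>\<mu>1 \<mu>2 b1 b2. \<mu>1 > 0 \<Longrightarrow> \<mu>2 > 0 \<Longrightarrow> \<mu>1 / \<mu>2 \<le> \<delta>1 \<or> C1 \<le> norm (b1 - b2) / \<mu>1 \<Longrightarrow>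
       integral UNIV (\<lambda>x. sqrt (rescaled G1 \<mu>1 b1 x * rescaled G2 \<mu>2 b2 x)) \<le> e"
    using integral_sqrt_rescaled_small[OF G1 G2 e] by blast
  obtain \<delta>2 C2 where \<delta>2: "\<delta>2 > 0"
    and small2: "\<And>\<mu>1 \<mu>2 b1 b2. \<mu>1 > 0 \<Longrightarrow> \<mu>2 > 0 \<Longrightarrow> \<mu>1 / \<mu>2 \<le> \<delta>2 \<or> C2 \<le> norm (b1 - b2) / \<mu>1 \<Longrightarrow>
       integral UNIV (\<lambda>x. sqrt (rescaled G2 \<mu>1 b1 x * rescaled G1 \<mu>2 b2 x)) \<le> e"
    using integral_sqrt_rescaled_small[OF G2 G1 e] by blast
  show ?thesis
  proof (rule that[of "C1 + 1 / \<delta>1 + 1 / \<delta>2"])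
    fix \<mu>1 \<mu>2 :: real and b1 b2 :: 'a
    assume \<mu>: "\<mu>1 > 0" "\<mu>2 > 0" and Q: "C1 + 1 / \<delta>1 + 1 / \<delta>2 \<le> \<mu>1 / \<mu>2 + \<mu>2 / \<mu>1 + norm (b1 - b2) / \<mu>1"
    show "integral UNIV (\<lambda>x. sqrt (rescaled G1 \<mu>1 b1 x * rescaled G2 \<mu>2 b2 x)) \<le> e"
    proof (cases "\<mu>2 / \<mu>1 \<le> \<delta>2")
      case True
      then show ?thesis
        using small2[OF \<mu>(2,1) disjI1[OF True], of b2 b1] by (simp add: mult.commute)
    next
      case False
      have "\<mu>1 / \<mu>2 \<le> \<delta>1 \<or> C1 \<le> norm (b1 - b2) / \<mu>1"
      proof (cases "\<mu>1 / \<mu>2 \<le> \<delta>1")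
        case False
        then have "\<mu>2 / \<mu>1 < 1 / \<delta>1" "\<mu>1 / \<mu>2 < 1 / \<delta>2"
          using \<open>\<not> \<mu>2 / \<mu>1 \<le> \<delta>2\<close> \<mu> \<delta>1 \<delta>2 by (auto simp: field_simps)
        with Q show ?thesis
          by linarith
      qed simp
      then show ?thesis
        by (rule small1[OF \<mu>])
    qed
  qed
qed

lemma integral_sqrt_rescaled_tendsto_0:
  fixes G1 G2 :: "'a::euclidean_space \<Rightarrow> real"
  assumes G1: "energy_density G1" and G2: "energy_density G2"
    and \<mu>1: "\<And>n. \<mu>1 n > 0" and \<mu>2: "\<And>n. \<mu>2 n > 0"
    and separated: "filterlim (\<lambda>n. \<mu>1 n / \<mu>2 n + \<mu>2 n / \<mu>1 n + norm (b1 n - b2 n) / \<mu>1 n) at_top sequentially"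
  shows "(\<lambda>n. integral UNIV (\<lambda>x. sqrt (rescaled G1 (\<mu>1 n) (b1 n) x * rescaled G2 (\<mu>2 n) (b2 n) x))) \<longlonglongrightarrow> 0"
    (is "?X \<longlonglongrightarrow> 0")
proof (rule order_tendstoI)
  fix a :: real
  assume "a < 0"
  have "0 \<le> ?X n" for n
    using G1 G2 \<mu>1 \<mu>2
    by (intro energy_density_integral_nonneg energy_density_sqrt_mult energy_density_rescaled)
  with \<open>a < 0\<close> show "\<forall>\<^sub>F n in sequentially. a < ?X n"
    by (intro always_eventually allI) (rule less_le_trans)
next
  fix e :: real
  assume "e > 0"
  then have "e / 2 > 0"
    by simp
  then obtain C where C: "\<And>\<mu>1 \<mu>2 b1 b2. \<mu>1 > 0 \<Longrightarrow> \<mu>2 > 0 \<Longrightarrow>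
      C \<le> \<mu>1 / \<mu>2 + \<mu>2 / \<mu>1 + norm (b1 - b2) / \<mu>1 \<Longrightarrow>
      integral UNIV (\<lambda>x. sqrt (rescaled G1 \<mu>1 b1 x * rescaled G2 \<mu>2 b2 x)) \<le> e / 2"
    using integral_sqrt_rescaled_small_if_separated[OF G1 G2] by blast
  have "\<forall>\<^sub>F n in sequentially. C \<le> \<mu>1 n / \<mu>2 n + \<mu>2 n / \<mu>1 n + norm (b1 n - b2 n) / \<mu>1 n"
    using separated by (simp add: filterlim_at_top)
  then show "\<forall>\<^sub>F n in sequentially. ?X n < e"
  proof (rule eventually_mono)
    fix n
    assume "C \<le> \<mu>1 n / \<mu>2 n + \<mu>2 n / \<mu>1 n + norm (b1 n - b2 n) / \<mu>1 n"
    then have "?X n \<le> e / 2"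
      by (rule C[OF \<mu>1 \<mu>2])
    with \<open>e > 0\<close> show "?X n < e"
      by linarith
  qed
qed

section \<open>Energy of a superposition of rescaled maps\<close>

definition finite_energy_C1 :: "(real^2 \<Rightarrow> real^3) \<Rightarrow> bool" where
  "finite_energy_C1 w \<longleftrightarrow>
     (\<forall>x. w differentiable (at x)) \<and> (\<forall>i. continuous_on UNIV (pd i w)) \<and> grad_sq w integrable_on UNIV"

lemma harmonic_map_imp_finite_energy_C1:
  assumes "harmonic_map w"
  shows "finite_energy_C1 w"
  using assms unfolding harmonic_map_def finite_energy_C1_def
  by (auto intro!: continuous_at_imp_continuous_on differentiable_imp_continuous_within)

lemma continuous_on_grad_sq:
  assumes "\<And>i. continuous_on UNIV (pd i w)"
  shows "continuous_on UNIV (grad_sq w)"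
  unfolding grad_sq_def[abs_def] by (intro continuous_intros assms)

lemma energy_density_grad_sq:
  assumes "finite_energy_C1 w"
  shows "energy_density (grad_sq w)"
  using assms continuous_on_grad_sq
  by (auto simp: energy_density_def finite_energy_C1_def grad_sq_def intro: sum_nonneg)

lemma pd_superposition:
  fixes \<omega> :: "'j \<Rightarrow> real^2 \<Rightarrow> real^3"
  assumes "finite J" and diff: "\<And>j x. j \<in> J \<Longrightarrow> \<omega> j differentiable (at x)"
  shows "pd i (\<lambda>x. w0 + (\<Sum>j\<in>J. \<omega> j ((1 / \<mu> j) *\<^sub>R (x - b j)) - c j)) x
       = (\<Sum>j\<in>J. (1 / \<mu> j) *\<^sub>R pd i (\<omega> j) ((1 / \<mu> j) *\<^sub>R (x - b j)))"
proof -
  let ?y = "\<lambda>j. (1 / \<mu> j) *\<^sub>R (x - b j)"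
  let ?D = "\<lambda>j. frechet_derivative (\<omega> j) (at (?y j))"
  have D: "(\<omega> j has_derivative ?D j) (at (?y j))" if "j \<in> J" for j
    using diff[OF that] by (simp add: frechet_derivative_works)
  have rescale: "((\<lambda>x. (1 / \<mu> j) *\<^sub>R (x - b j)) has_derivative (\<lambda>v. (1 / \<mu> j) *\<^sub>R v)) (at x)" for j
    by (auto intro!: derivative_eq_intros)
  have "((\<lambda>x. \<omega> j ((1 / \<mu> j) *\<^sub>R (x - b j)) - c j) has_derivative (\<lambda>v. ?D j ((1 / \<mu> j) *\<^sub>R v))) (at x)"
    if "j \<in> J" for j
    using has_derivative_diff[OF has_derivative_compose[OF rescale D[OF that]] has_derivative_const[of "c j"]]
    by (simp add: o_def)
  then have "((\<lambda>x. w0 + (\<Sum>j\<in>J. \<omega> j ((1 / \<mu> j) *\<^sub>R (x - b j)) - c j)) has_derivative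
      (\<lambda>v. 0 + (\<Sum>j\<in>J. ?D j ((1 / \<mu> j) *\<^sub>R v)))) (at x)"
    by (intro has_derivative_add has_derivative_const has_derivative_sum)
  moreover have "?D j ((1 / \<mu> j) *\<^sub>R v) = (1 / \<mu> j) *\<^sub>R ?D j v" if "j \<in> J" for j v
    using has_derivative_linear[OF D[OF that]] by (rule linear_cmul)
  ultimately show ?thesis
    unfolding pd_def by (simp add: frechet_derivative_at[symmetric])
qed

text \<open>Only in dimension two is the chain-rule factor \<open>1 / \<mu>\<^sup>2\<close> the Jacobian of the rescaling.\<close>

lemma grad_sq_rescale:
  assumes "\<mu> > 0"
  shows "(\<Sum>i\<in>UNIV. (norm ((1 / \<mu>) *\<^sub>R pd i w ((1 / \<mu>) *\<^sub>R (x - b))))\<^sup>2) = rescaled (grad_sq w) \<mu> b x"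
  using assms by (simp add: rescaled_def grad_sq_def power_mult_distrib sum_divide_distrib power2_eq_square)

lemma sum_norm_sum_squared_le:
  fixes v :: "'j \<Rightarrow> 'i \<Rightarrow> 'v::real_inner"
  assumes J: "finite J" and I: "finite I"
  shows "\<bar>(\<Sum>i\<in>I. (norm (\<Sum>j\<in>J. v j i))\<^sup>2) - (\<Sum>j\<in>J. \<Sum>i\<in>I. (norm (v j i))\<^sup>2)\<bar>
     \<le> (\<Sum>j\<in>J. \<Sum>k\<in>J - {j}. sqrt ((\<Sum>i\<in>I. (norm (v j i))\<^sup>2) * (\<Sum>i\<in>I. (norm (v k i))\<^sup>2)))"
proof -
  have "(norm (\<Sum>j\<in>J. v j i))\<^sup>2 = (\<Sum>j\<in>J. (norm (v j i))\<^sup>2 + (\<Sum>k\<in>J - {j}. inner (v j i) (v k i)))" for i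
  proof -
    have "(norm (\<Sum>j\<in>J. v j i))\<^sup>2 = (\<Sum>j\<in>J. \<Sum>k\<in>J. inner (v j i) (v k i))"
      by (simp add: power2_norm_eq_inner inner_sum_left inner_sum_right) (rule sum.swap)
    also have "\<dots> = (\<Sum>j\<in>J. inner (v j i) (v j i) + (\<Sum>k\<in>J - {j}. inner (v j i) (v k i)))"
      using J by (intro sum.cong refl) (simp add: sum.remove)
    finally show ?thesis
      by (simp add: power2_norm_eq_inner)
  qed
  then have diff: "(\<Sum>i\<in>I. (norm (\<Sum>j\<in>J. v j i))\<^sup>2) - (\<Sum>j\<in>J. \<Sum>i\<in>I. (norm (v j i))\<^sup>2)
      = (\<Sum>j\<in>J. \<Sum>k\<in>J - {j}. \<Sum>i\<in>I. inner (v j i) (v k i))"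
    by (simp add: sum.distrib sum.swap[of _ J I] sum.swap[of _ "J - {_}" I])
  have cs: "\<bar>\<Sum>i\<in>I. inner (v j i) (v k i)\<bar> \<le> sqrt ((\<Sum>i\<in>I. (norm (v j i))\<^sup>2) * (\<Sum>i\<in>I. (norm (v k i))\<^sup>2))"
    for j k
  proof -
    have "\<bar>\<Sum>i\<in>I. inner (v j i) (v k i)\<bar> \<le> (\<Sum>i\<in>I. norm (v j i) * norm (v k i))"
      by (rule order_trans[OF sum_abs sum_mono]) (simp add: Cauchy_Schwarz_ineq2)
    also have "\<dots> \<le> L2_set (\<lambda>i. norm (v j i)) I * L2_set (\<lambda>i. norm (v k i)) I"
      using L2_set_mult_ineq[of "\<lambda>i. norm (v j i)" "\<lambda>i. norm (v k i)" I] by simp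
    finally show ?thesis
      by (simp add: L2_set_def real_sqrt_mult)
  qed
  show ?thesis
    unfolding diff
    by (rule order_trans[OF sum_abs sum_mono], rule order_trans[OF sum_abs sum_mono], rule cs)
qed

lemma grad_sq_superposition:
  fixes \<omega> :: "'j \<Rightarrow> real^2 \<Rightarrow> real^3" and w0 :: "real^3" and c :: "'j \<Rightarrow> real^3"
    and \<mu> :: "'j \<Rightarrow> real" and b :: "'j \<Rightarrow> real^2"
  assumes J: "finite J" and \<omega>: "\<And>j. j \<in> J \<Longrightarrow> finite_energy_C1 (\<omega> j)" and \<mu>: "\<And>j. j \<in> J \<Longrightarrow> \<mu> j > 0"
  defines "F \<equiv> \<lambda>x. w0 + (\<Sum>j\<in>J. \<omega> j ((1 / \<mu> j) *\<^sub>R (x - b j)) - c j)"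
    and "h \<equiv> \<lambda>j. rescaled (grad_sq (\<omega> j)) (\<mu> j) (b j)"
  shows "\<bar>grad_sq F x - (\<Sum>j\<in>J. h j x)\<bar> \<le> (\<Sum>j\<in>J. \<Sum>k\<in>J - {j}. sqrt (h j x * h k x))"
    and "continuous_on UNIV (grad_sq F)"
proof -
  have pd_F: "pd i F = (\<lambda>x. \<Sum>j\<in>J. (1 / \<mu> j) *\<^sub>R pd i (\<omega> j) ((1 / \<mu> j) *\<^sub>R (x - b j)))" for i
    unfolding F_def using J \<omega> by (intro ext pd_superposition) (auto simp: finite_energy_C1_def)
  define V where "V j i = (1 / \<mu> j) *\<^sub>R pd i (\<omega> j) ((1 / \<mu> j) *\<^sub>R (x - b j))" for j i
  have V: "(\<Sum>i\<in>UNIV. (norm (V j i))\<^sup>2) = h j x" if "j \<in> J" for j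
    unfolding h_def V_def using \<mu>[OF that] by (rule grad_sq_rescale)
  have "grad_sq F x = (\<Sum>i\<in>UNIV. (norm (\<Sum>j\<in>J. V j i))\<^sup>2)"
    by (simp add: grad_sq_def pd_F V_def)
  moreover have "(\<Sum>j\<in>J. \<Sum>i\<in>UNIV. (norm (V j i))\<^sup>2) = (\<Sum>j\<in>J. h j x)"
    using V by (intro sum.cong refl) auto
  moreover have "(\<Sum>j\<in>J. \<Sum>k\<in>J - {j}. sqrt ((\<Sum>i\<in>UNIV. (norm (V j i))\<^sup>2) * (\<Sum>i\<in>UNIV. (norm (V k i))\<^sup>2)))
      = (\<Sum>j\<in>J. \<Sum>k\<in>J - {j}. sqrt (h j x * h k x))"
    using V by (intro sum.cong refl) auto
  ultimately show "\<bar>grad_sq F x - (\<Sum>j\<in>J. h j x)\<bar> \<le> (\<Sum>j\<in>J. \<Sum>k\<in>J - {j}. sqrt (h j x * h k x))"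
    using sum_norm_sum_squared_le[OF J finite_class.finite_UNIV, of V] by (simp only:)
  have "continuous_on UNIV (pd i F)" for i
    unfolding pd_F
  proof (intro continuous_on_sum continuous_on_scaleR continuous_on_const)
    fix j
    assume "j \<in> J"
    then have "continuous_on UNIV (pd i (\<omega> j))"
      using \<omega> by (simp add: finite_energy_C1_def)
    then show "continuous_on UNIV (\<lambda>x. pd i (\<omega> j) ((1 / \<mu> j) *\<^sub>R (x - b j)))"
      by (rule continuous_on_compose2) (auto intro!: continuous_intros)
  qed
  then show "continuous_on UNIV (grad_sq F)"
    by (rule continuous_on_grad_sq)
qed

lemma energy_superposition_estimate:
  fixes \<omega> :: "'j \<Rightarrow> real^2 \<Rightarrow> real^3" and w0 :: "real^3" and c :: "'j \<Rightarrow> real^3"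
    and \<mu> :: "'j \<Rightarrow> real" and b :: "'j \<Rightarrow> real^2"
  assumes J: "finite J" and \<omega>: "\<And>j. j \<in> J \<Longrightarrow> finite_energy_C1 (\<omega> j)" and \<mu>: "\<And>j. j \<in> J \<Longrightarrow> \<mu> j > 0"
    and D: "D \<in> sets lebesgue"
  defines "F \<equiv> \<lambda>x. w0 + (\<Sum>j\<in>J. \<omega> j ((1 / \<mu> j) *\<^sub>R (x - b j)) - c j)"
    and "h \<equiv> \<lambda>j. rescaled (grad_sq (\<omega> j)) (\<mu> j) (b j)"
  shows "\<bar>2 * energy F D - (\<Sum>j\<in>J. integral D (h j))\<bar>
     \<le> (\<Sum>j\<in>J. \<Sum>k\<in>J - {j}. integral UNIV (\<lambda>x. sqrt (h j x * h k x)))"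
proof -
  define H where "H x = (\<Sum>j\<in>J. h j x)" for x
  define P where "P x = (\<Sum>j\<in>J. \<Sum>k\<in>J - {j}. sqrt (h j x * h k x))" for x
  have h: "energy_density (h j)" if "j \<in> J" for j
    unfolding h_def using \<omega>[OF that] \<mu>[OF that] by (intro energy_density_rescaled energy_density_grad_sq)
  have H: "energy_density H" and P: "energy_density P"
    unfolding H_def P_def using J h by (auto intro!: energy_density_sum energy_density_sqrt_mult)
  have bound: "\<bar>grad_sq F x - H x\<bar> \<le> P x" for x
    unfolding F_def H_def P_def h_def by (rule grad_sq_superposition(1)[OF J \<omega> \<mu>])
  have "grad_sq F integrable_on D"
  proof (rule continuous_dominated_integrable_on[OF _ _ _ D])
    show "continuous_on UNIV (grad_sq F)"
      unfolding F_def by (rule grad_sq_superposition(2)[OF J \<omega> \<mu>])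
    show "(\<lambda>x. H x + P x) integrable_on UNIV"
      using energy_density_add[OF H P] by (rule energy_densityD)
    show "\<bar>grad_sq F x\<bar> \<le> H x + P x" for x
      using bound[of x] energy_densityD(2)[OF H, of x] by linarith
  qed
  then have "\<bar>integral D (grad_sq F) - integral D H\<bar> = \<bar>integral D (\<lambda>x. grad_sq F x - H x)\<bar>"
    using energy_density_integrable_on[OF H D] by (simp add: integral_diff)
  also have "\<dots> \<le> integral D P"
    using integral_norm_bound_integral[of "\<lambda>x. grad_sq F x - H x" D P] bound
      \<open>grad_sq F integrable_on D\<close> energy_density_integrable_on[OF H D] energy_density_integrable_on[OF P D]
    by (simp add: integrable_diff)
  also have "\<dots> \<le> integral UNIV P"
    using D by (intro energy_density_integral_mono[OF P]) auto
  also have "\<dots> = (\<Sum>j\<in>J. integral UNIV (\<lambda>x. \<Sum>k\<in>J - {j}. sqrt (h j x * h k x)))"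
    unfolding P_def using J h
    by (intro integral_sum energy_densityD(3) energy_density_sum energy_density_sqrt_mult) auto
  also have "\<dots> = (\<Sum>j\<in>J. \<Sum>k\<in>J - {j}. integral UNIV (\<lambda>x. sqrt (h j x * h k x)))"
    using J h by (intro sum.cong refl integral_sum energy_densityD(3) energy_density_sqrt_mult) auto
  finally show ?thesis
    unfolding energy_def H_def using J h D by (simp add: integral_sum energy_density_integrable_on)
qed

lemma energy_superposition_tendsto:
  fixes \<omega> :: "'j \<Rightarrow> real^2 \<Rightarrow> real^3" and w0 :: "real^3" and c :: "'j \<Rightarrow> real^3"
    and \<mu> :: "nat \<Rightarrow> 'j \<Rightarrow> real" and b :: "nat \<Rightarrow> 'j \<Rightarrow> real^2"
  assumes J: "finite J" and \<omega>: "\<And>j. j \<in> J \<Longrightarrow> finite_energy_C1 (\<omega> j)"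
    and \<mu>: "\<And>n j. j \<in> J \<Longrightarrow> \<mu> n j > 0"
    and separated: "\<And>j k. j \<in> J \<Longrightarrow> k \<in> J - {j} \<Longrightarrow>
      filterlim (\<lambda>n. \<mu> n j / \<mu> n k + \<mu> n k / \<mu> n j + norm (b n j - b n k) / \<mu> n j) at_top sequentially"
    and deep: "\<And>j. j \<in> J \<Longrightarrow> filterlim (\<lambda>n. (\<rho> n - dist (y n) (b n j)) / \<mu> n j) at_top sequentially"
  shows "(\<lambda>n. energy (\<lambda>x. w0 + (\<Sum>j\<in>J. \<omega> j ((1 / \<mu> n j) *\<^sub>R (x - b n j)) - c j)) (ball (y n) (\<rho> n)))
    \<longlonglongrightarrow> (\<Sum>j\<in>J. energy (\<omega> j) UNIV)"
proof -
  define F where "F n = (\<lambda>x. w0 + (\<Sum>j\<in>J. \<omega> j ((1 / \<mu> n j) *\<^sub>R (x - b n j)) - c j))" for n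
  define h where "h n j = rescaled (grad_sq (\<omega> j)) (\<mu> n j) (b n j)" for n j
  define S where "S n = (\<Sum>j\<in>J. integral (ball (y n) (\<rho> n)) (h n j))" for n
  have cross: "(\<lambda>n. \<Sum>j\<in>J. \<Sum>k\<in>J - {j}. integral UNIV (\<lambda>x. sqrt (h n j x * h n k x))) \<longlonglongrightarrow> 0"
  proof (intro tendsto_null_sum)
    fix j k
    assume "j \<in> J" "k \<in> J - {j}"
    then show "(\<lambda>n. integral UNIV (\<lambda>x. sqrt (h n j x * h n k x))) \<longlonglongrightarrow> 0"
      unfolding h_def by (intro integral_sqrt_rescaled_tendsto_0 energy_density_grad_sq \<omega> \<mu> separated) auto
  qed
  have estimate: "norm (2 * energy (F n) (ball (y n) (\<rho> n)) - S n)
      \<le> (\<Sum>j\<in>J. \<Sum>k\<in>J - {j}. integral UNIV (\<lambda>x. sqrt (h n j x * h n k x)))" for n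
    unfolding F_def h_def S_def real_norm_def by (rule energy_superposition_estimate) (use J \<omega> \<mu> in auto)
  have "(\<lambda>n. 2 * energy (F n) (ball (y n) (\<rho> n)) - S n) \<longlonglongrightarrow> 0"
    by (rule Lim_null_comparison[OF always_eventually[OF allI[OF estimate]] cross])
  moreover have "S \<longlonglongrightarrow> (\<Sum>j\<in>J. integral UNIV (grad_sq (\<omega> j)))"
    unfolding S_def
  proof (rule tendsto_sum)
    fix j
    assume "j \<in> J"
    then show "(\<lambda>n. integral (ball (y n) (\<rho> n)) (h n j)) \<longlonglongrightarrow> integral UNIV (grad_sq (\<omega> j))"
      unfolding h_def by (intro integral_rescaled_ball_tendsto energy_density_grad_sq \<omega> \<mu> deep)
  qed
  ultimately have "(\<lambda>n. (2 * energy (F n) (ball (y n) (\<rho> n)) - S n) + S n)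
      \<longlonglongrightarrow> 0 + (\<Sum>j\<in>J. integral UNIV (grad_sq (\<omega> j)))"
    by (rule tendsto_add)
  then have "(\<lambda>n. 2 * energy (F n) (ball (y n) (\<rho> n))) \<longlonglongrightarrow> (\<Sum>j\<in>J. integral UNIV (grad_sq (\<omega> j)))"
    by simp
  from tendsto_mult_left[OF this, of "1 / 2"] show ?thesis
    unfolding F_def energy_def by (simp add: sum_distrib_left)
qed

section \<open>Divergence of the bubble parameters\<close>

lemma tendsto_0_nonneg_summand:
  fixes f :: "nat \<Rightarrow> 'i \<Rightarrow> real"
  assumes "finite I" "\<And>n i. i \<in> I \<Longrightarrow> 0 \<le> f n i" "(\<lambda>n. \<Sum>i\<in>I. f n i) \<longlonglongrightarrow> 0" "i \<in> I"
  shows "(\<lambda>n. f n i) \<longlonglongrightarrow> 0"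
proof (rule real_tendsto_sandwich[OF _ _ tendsto_const assms(3)])
  show "\<forall>\<^sub>F n in sequentially. 0 \<le> f n i"
    using assms(2,4) by simp
  show "\<forall>\<^sub>F n in sequentially. f n i \<le> (\<Sum>i\<in>I. f n i)"
    using assms(1,2,4) by (intro always_eventually allI member_le_sum) auto
qed

lemma infdist_frontier_ball:
  fixes y b :: "'a::euclidean_space"
  assumes b: "b \<in> ball y \<rho>"
  shows "0 < infdist b (frontier (ball y \<rho>))" "infdist b (frontier (ball y \<rho>)) \<le> \<rho> - dist y b"
proof -
  have "\<rho> > 0"
    using b zero_le_dist[of y b] by (simp only: mem_ball)
  then have frontier: "frontier (ball y \<rho>) = sphere y \<rho>"
    by simp
  obtain u :: 'a where u: "norm u = 1" "b - y = dist y b *\<^sub>R u"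
  proof (cases "b = y")
    case True
    obtain u :: 'a where "norm u = 1"
      using vector_choose_size[of 1] by auto
    with True show ?thesis
      using that by simp
  next
    case False
    then show ?thesis
      using that[of "sgn (b - y)"] by (simp add: norm_sgn dist_norm norm_minus_commute sgn_div_norm)
  qed
  have "y + \<rho> *\<^sub>R u \<in> frontier (ball y \<rho>)"
    using u \<open>\<rho> > 0\<close> by (simp add: frontier dist_norm)
  moreover have "dist b (y + \<rho> *\<^sub>R u) = \<rho> - dist y b"
  proof -
    have "b - (y + \<rho> *\<^sub>R u) = (dist y b - \<rho>) *\<^sub>R u"
      using u(2) by (simp add: algebra_simps)
    then show ?thesis
      using u(1) b by (simp add: dist_norm)
  qed
  ultimately show "infdist b (frontier (ball y \<rho>)) \<le> \<rho> - dist y b"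
    by (metis infdist_le)
  show "0 < infdist b (frontier (ball y \<rho>))"
    using b \<open>\<rho> > 0\<close> by (intro infdist_pos_not_in_closed) (auto simp: frontier)
qed

lemma filterlim_at_top_of_inverse_sum:
  fixes f :: "nat \<Rightarrow> 'i \<Rightarrow> real"
  assumes I: "finite I" and pos: "\<And>n i. i \<in> I \<Longrightarrow> f n i > 0"
    and lim: "(\<lambda>n. \<Sum>i\<in>I. inverse (f n i)) \<longlonglongrightarrow> 0" and i: "i \<in> I"
  shows "filterlim (\<lambda>n. f n i) at_top sequentially"
proof -
  have "(\<lambda>n. inverse (f n i)) \<longlonglongrightarrow> 0"
    using pos by (intro tendsto_0_nonneg_summand[OF I _ lim i]) (simp add: less_imp_le)
  then show ?thesis
    using filterlim_inverse_at_top[of "\<lambda>n. inverse (f n i)"] pos[OF i] by simp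
qed

lemma filterlim_dist_frontier_ball:
  fixes b y :: "nat \<Rightarrow> 'a::euclidean_space"
  assumes b: "\<And>n. b n \<in> ball (y n) (\<rho> n)" and \<mu>: "\<And>n. \<mu> n > 0"
    and lim: "(\<lambda>n. \<mu> n / infdist (b n) (frontier (ball (y n) (\<rho> n)))) \<longlonglongrightarrow> 0"
  shows "filterlim (\<lambda>n. (\<rho> n - dist (y n) (b n)) / \<mu> n) at_top sequentially"
proof (rule filterlim_at_top_mono)
  define d where "d n = infdist (b n) (frontier (ball (y n) (\<rho> n)))" for n
  have d: "d n > 0" "d n \<le> \<rho> n - dist (y n) (b n)" for n
    unfolding d_def using infdist_frontier_ball[OF b] by auto
  show "filterlim (\<lambda>n. d n / \<mu> n) at_top sequentially"
    using filterlim_inverse_at_top[OF lim[folded d_def]] \<mu> d(1) by simp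
  show "\<forall>\<^sub>F n in sequentially. d n / \<mu> n \<le> (\<rho> n - dist (y n) (b n)) / \<mu> n"
    using d(2) \<mu> by (intro always_eventually allI divide_right_mono) (auto simp: less_imp_le)
qed

lemma bubble_parameters_diverge:
  fixes \<mu> :: "nat \<Rightarrow> 'j \<Rightarrow> real" and b :: "nat \<Rightarrow> 'j \<Rightarrow> 'a::euclidean_space"
  assumes J: "finite J" and \<mu>: "\<And>n j. j \<in> J \<Longrightarrow> \<mu> n j > 0" and b: "\<And>n j. j \<in> J \<Longrightarrow> b n j \<in> ball (y n) (\<rho> n)"
    and lim: "(\<lambda>n. (\<Sum>j\<in>J. \<Sum>k\<in>J - {j}.
                 inverse (\<mu> n j / \<mu> n k + \<mu> n k / \<mu> n j + norm (b n j - b n k) / \<mu> n j))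
              + (\<Sum>j\<in>J. \<mu> n j / infdist (b n j) (frontier (ball (y n) (\<rho> n)))))
             \<longlonglongrightarrow> 0"
  shows "\<And>j k. j \<in> J \<Longrightarrow> k \<in> J - {j} \<Longrightarrow>
      filterlim (\<lambda>n. \<mu> n j / \<mu> n k + \<mu> n k / \<mu> n j + norm (b n j - b n k) / \<mu> n j) at_top sequentially"
    and "\<And>j. j \<in> J \<Longrightarrow> filterlim (\<lambda>n. (\<rho> n - dist (y n) (b n j)) / \<mu> n j) at_top sequentially"
proof -
  define Q where "Q n j k = \<mu> n j / \<mu> n k + \<mu> n k / \<mu> n j + norm (b n j - b n k) / \<mu> n j" for n j k
  define d where "d n j = \<mu> n j / infdist (b n j) (frontier (ball (y n) (\<rho> n)))" for n j
  have Q: "Q n j k > 0" if "j \<in> J" "k \<in> J" for n j k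
    using \<mu>[OF that(1), of n] \<mu>[OF that(2), of n] by (simp add: Q_def add_pos_nonneg)
  have inner_nonneg: "0 \<le> (\<Sum>k\<in>J - {j}. inverse (Q n j k))" if "j \<in> J" for n j
    using Q that by (intro sum_nonneg) (simp add: less_imp_le)
  have d_nonneg: "0 \<le> d n j" if "j \<in> J" for n j
    using \<mu>[OF that, of n] by (simp add: d_def infdist_nonneg)
  define S1 where "S1 n = (\<Sum>j\<in>J. \<Sum>k\<in>J - {j}. inverse (Q n j k))" for n
  define S2 where "S2 n = (\<Sum>j\<in>J. d n j)" for n
  have nonneg: "0 \<le> S1 n" "0 \<le> S2 n" for n
    unfolding S1_def S2_def using inner_nonneg d_nonneg by (simp_all add: sum_nonneg)
  have lim': "(\<lambda>n. S1 n + S2 n) \<longlonglongrightarrow> 0"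
    using lim unfolding S1_def S2_def Q_def d_def .
  have "S1 \<longlonglongrightarrow> 0"
    by (rule real_tendsto_sandwich[OF _ _ tendsto_const lim']) (use nonneg in auto)
  then have "(\<lambda>n. \<Sum>k\<in>J - {j}. inverse (Q n j k)) \<longlonglongrightarrow> 0" if "j \<in> J" for j
    using tendsto_0_nonneg_summand[OF J inner_nonneg _ that] by (simp add: S1_def[abs_def])
  then show "filterlim (\<lambda>n. Q n j k) at_top sequentially" if "j \<in> J" "k \<in> J - {j}" for j k
    using J Q that by (intro filterlim_at_top_of_inverse_sum[of "J - {j}"]) auto
  have "S2 \<longlonglongrightarrow> 0"
    by (rule real_tendsto_sandwich[OF _ _ tendsto_const lim']) (use nonneg in auto)
  then have "(\<lambda>n. d n j) \<longlonglongrightarrow> 0" if "j \<in> J" for j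
    using tendsto_0_nonneg_summand[OF J d_nonneg _ that] by (simp add: S2_def[abs_def])
  then show "filterlim (\<lambda>n. (\<rho> n - dist (y n) (b n j)) / \<mu> n j) at_top sequentially" if "j \<in> J" for j
    using b \<mu> that by (intro filterlim_dist_frontier_ball) (auto simp: d_def)
qed

theorem lemma2p5:
  fixes y :: "nat \<Rightarrow> real^2" and \<rho> :: "nat \<Rightarrow> real" and M :: nat
    and \<omega>inf :: "real^3" and \<omega> :: "nat \<Rightarrow> (real^2 \<Rightarrow> real^3)"
    and b :: "nat \<Rightarrow> nat \<Rightarrow> real^2" and \<mu> :: "nat \<Rightarrow> nat \<Rightarrow> real"
  assumes rho_pos: "\<And>n. \<rho> n > 0"
    and winf_unit: "norm \<omega>inf = 1"
    and harm: "\<And>j. j \<in> {1..M} \<Longrightarrow> harmonic_map (\<omega> j)"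
    and noncst: "\<And>j. j \<in> {1..M} \<Longrightarrow> \<not> (\<exists>c. \<forall>x. \<omega> j x = c)"
    and b_in: "\<And>n j. j \<in> {1..M} \<Longrightarrow> b n j \<in> ball (y n) (\<rho> n)"
    and mu_pos: "\<And>n j. j \<in> {1..M} \<Longrightarrow> \<mu> n j > 0"
    and lim: "(\<lambda>n. (\<Sum>j\<in>{1..M}. \<Sum>k\<in>{1..M} - {j}.
                 inverse (\<mu> n j / \<mu> n k + \<mu> n k / \<mu> n j + norm (b n j - b n k) / \<mu> n j))
              + (\<Sum>j\<in>{1..M}. \<mu> n j / infdist (b n j) (frontier (ball (y n) (\<rho> n)))))
             \<longlonglongrightarrow> 0"
  shows "(\<lambda>n. energy (\<lambda>x. \<omega>inf + (\<Sum>j\<in>{1..M}.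
                 \<omega> j ((1 / \<mu> n j) *\<^sub>R (x - b n j)) - value_at_infinity (\<omega> j)))
               (ball (y n) (\<rho> n)))
         \<longlonglongrightarrow> (\<Sum>j\<in>{1..M}. energy (\<omega> j) UNIV)"
proof -
  define J where "J = {1..M}"
  have J: "finite J"
    by (simp add: J_def)
  have \<omega>: "finite_energy_C1 (\<omega> j)" if "j \<in> J" for j
    using harm that by (simp add: J_def harmonic_map_imp_finite_energy_C1)
  have \<mu>: "\<mu> n j > 0" if "j \<in> J" for n j
    using mu_pos that by (simp add: J_def)
  have "b n j \<in> ball (y n) (\<rho> n)" if "j \<in> J" for n j
    using b_in that by (simp add: J_def)
  note diverge = bubble_parameters_diverge[OF J \<mu> this lim[folded J_def]]
  show ?thesis
    unfolding J_def[symmetric] by (rule energy_superposition_tendsto[OF J \<omega> \<mu> diverge])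
qed

end
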